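(* Let $X$ be a complex manifold. (a) The set of tame pairs is generic (residual) in $X\times{\operatorname{Aut}}\,X$. (b) For a generic automorphism $f\in{\operatorname{Aut}}\,X$, a generic point of $X$ is tame for $f$.
   Context: ${\operatorname{Aut}}\,X$ is the group of holomorphic automorphisms of $X$ with the compact-open topology (a Polish group). For compact $K\subset X$ let $T_K^+=\{(x,g)\in X\times{\operatorname{Aut}}\,X: g^j(x)\in K\text{ for all } j\geq0\}$ and $T_K^-=\{(x,g)\in X\times{\operatorname{Aut}}\,X: g^j(x)\in K\text{ for all } j\leq0\}$. A pair $(p,f)\in X\times {\operatorname{Aut}}\,X$ is tame (equivalently, $p$ is tame for $f$) if whenever $(p,f)$ lies in the interior of $T_K^+\cup T_K^-$ for some compact $K\subset X$, then $(p,f)$ lies in $\operatorname{int}(T_L^+)\cup\operatorname{int}(T_L^-)$ for some compact $L\subset X$. Generic means residual. *)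

theory Defs
  imports "HOL-Analysis.Analysis"
begin

definition cholo_on :: "(complex ^ 'n) set \<Rightarrow> (complex ^ 'n \<Rightarrow> complex ^ 'm) \<Rightarrow> bool" where
  "cholo_on S F \<longleftrightarrow> (\<forall>x\<in>S. \<exists>L. (F has_derivative L) (at x) \<and> (\<forall>c v. L (c *s v) = c *s L v))"

definition complex_atlas :: "('a::topological_space set \<times> ('a \<Rightarrow> complex ^ 'n)) set \<Rightarrow> bool" where
  "complex_atlas A \<longleftrightarrow>
     \<Union>(fst ` A) = UNIV \<and>
     (\<forall>(U,\<phi>)\<in>A. open U \<and> open (\<phi> ` U) \<and> inj_on \<phi> U \<and> continuous_on U \<phi> \<and>
                 continuous_on (\<phi> ` U) (inv_into U \<phi>)) \<and>
     (\<forall>(U,\<phi>)\<in>A. \<forall>(V,\<psi>)\<in>A. cholo_on (\<phi> ` (U \<inter> V)) (\<psi> \<circ> inv_into U \<phi>))"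

definition holo_map :: "('a::topological_space set \<times> ('a \<Rightarrow> complex ^ 'n)) set \<Rightarrow> ('a \<Rightarrow> 'a) \<Rightarrow> bool" where
  "holo_map A h \<longleftrightarrow> continuous_on UNIV h \<and>
     (\<forall>(U,\<phi>)\<in>A. \<forall>(V,\<psi>)\<in>A. cholo_on (\<phi> ` (U \<inter> h -` V)) (\<psi> \<circ> h \<circ> inv_into U \<phi>))"

definition Aut :: "('a::topological_space set \<times> ('a \<Rightarrow> complex ^ 'n)) set \<Rightarrow> ('a \<Rightarrow> 'a) set" where
  "Aut A = {g. bij g \<and> holo_map A g \<and> holo_map A (inv g)}"

definition compact_open_top :: "('a::topological_space \<Rightarrow> 'a) set \<Rightarrow> ('a \<Rightarrow> 'a) topology" where
  "compact_open_top F = topology_generated_by {{g\<in>F. g ` K \<subseteq> U} | K U. compact K \<and> open U}"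

definition aut_top :: "('a::topological_space set \<times> ('a \<Rightarrow> complex ^ 'n)) set \<Rightarrow> ('a \<Rightarrow> 'a) topology" where
  "aut_top A = compact_open_top (Aut A)"

definition XA_top :: "('a::topological_space set \<times> ('a \<Rightarrow> complex ^ 'n)) set \<Rightarrow> ('a \<times> ('a \<Rightarrow> 'a)) topology" where
  "XA_top A = prod_topology euclidean (aut_top A)"

definition residual_in :: "'b topology \<Rightarrow> 'b set \<Rightarrow> bool" where
  "residual_in T S \<longleftrightarrow> S \<subseteq> topspace T \<and>
     (\<exists>\<F>. countable \<F> \<and> (\<forall>U\<in>\<F>. openin T U \<and> T closure_of U = topspace T) \<and>
          topspace T \<inter> \<Inter>\<F> \<subseteq> S)"

definition T_plus :: "('a::topological_space set \<times> ('a \<Rightarrow> complex ^ 'n)) set \<Rightarrow> 'a set \<Rightarrow> ('a \<times> ('a \<Rightarrow> 'a)) set" where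
  "T_plus A K = {(x,g). g \<in> Aut A \<and> (\<forall>j::nat. (g ^^ j) x \<in> K)}"

definition T_minus :: "('a::topological_space set \<times> ('a \<Rightarrow> complex ^ 'n)) set \<Rightarrow> 'a set \<Rightarrow> ('a \<times> ('a \<Rightarrow> 'a)) set" where
  "T_minus A K = {(x,g). g \<in> Aut A \<and> (\<forall>j::nat. (inv g ^^ j) x \<in> K)}"

definition tame :: "('a::topological_space set \<times> ('a \<Rightarrow> complex ^ 'n)) set \<Rightarrow> 'a \<Rightarrow> ('a \<Rightarrow> 'a) \<Rightarrow> bool" where
  "tame A p f \<longleftrightarrow>
     (\<forall>K. compact K \<and> (p,f) \<in> XA_top A interior_of (T_plus A K \<union> T_minus A K) \<longrightarrow>
        (\<exists>L. compact L \<and> (p,f) \<in> XA_top A interior_of (T_plus A L) \<union> XA_top A interior_of (T_minus A L)))"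

end

theory Submission
  imports Defs
begin

text \<open>
  Since \<open>X\<close> is locally compact, the iterates \<open>g ^^ j\<close> depend continuously on \<open>g\<close> in the
  compact-open topology; hence for compact \<open>K\<close> the sets \<open>T\<^sub>K\<^sup>+\<close> and \<open>T\<^sub>K\<^sup>-\<close> are closed in
  \<open>X \<times> Aut X\<close>, and their frontiers are nowhere dense. Choose countably many compact sets \<open>L\<close>
  such that every compact set lies in one of them. A pair outside the frontiers of all
  \<open>T\<^sub>L\<^sup>\<plusminus>\<close> is tame: if it lies in \<open>T\<^sub>K\<^sup>+ \<union> T\<^sub>K\<^sup>-\<close> and \<open>K \<subseteq> L\<close>, it lies in \<open>T\<^sub>L\<^sup>+\<close> or \<open>T\<^sub>L\<^sup>-\<close>, hence
  in its interior. Part (b) follows from (a) by a Kuratowski--Ulam type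
  argument, which needs only a countable base of \<open>X\<close>: for \<open>f\<close> in a residual set, every
  slice over \<open>f\<close> of each of the countably many open dense sets meets every nonempty basic
  open set.
\<close>

lemma Hausdorff_space_euclidean_t2: "Hausdorff_space (euclidean :: 'a::t2_space topology)"
  unfolding Hausdorff_space_def disjnt_def by (metis hausdorff open_openin)

lemma locally_compact_space_complex_atlas:
  fixes A :: "('a::topological_space set \<times> ('a \<Rightarrow> complex ^ 'n)) set"
  assumes "complex_atlas A"
  shows "locally_compact_space (euclidean :: 'a topology)"
  unfolding locally_compact_space_def
proof (intro ballI)
  fix x :: 'a
  have "x \<in> \<Union>(fst ` A)"
    using assms by (simp add: complex_atlas_def)
  then obtain U \<phi> where chart: "(U, \<phi>) \<in> A" and "x \<in> U"
    by auto
  with assms have "open U" "open (\<phi> ` U)" "inj_on \<phi> U" "continuous_on U \<phi>"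
    and cont_inv: "continuous_on (\<phi> ` U) (inv_into U \<phi>)"
    unfolding complex_atlas_def by auto
  then obtain e where "e > 0" and e: "cball (\<phi> x) e \<subseteq> \<phi> ` U"
    using \<open>x \<in> U\<close> open_contains_cball by blast
  define V where "V = \<phi> -` ball (\<phi> x) e \<inter> U"
  define K where "K = inv_into U \<phi> ` cball (\<phi> x) e"
  have "open V"
    unfolding V_def using \<open>open U\<close> \<open>continuous_on U \<phi>\<close> continuous_on_open_vimage by blast
  moreover have "compact K"
    unfolding K_def using e by (intro compact_continuous_image continuous_on_subset[OF cont_inv]) auto
  moreover have "V \<subseteq> K"
  proof
    fix z assume "z \<in> V"
    then have "z = inv_into U \<phi> (\<phi> z)" "\<phi> z \<in> cball (\<phi> x) e"
      using \<open>inj_on \<phi> U\<close> by (auto simp: V_def)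
    then show "z \<in> K"
      unfolding K_def by blast
  qed
  ultimately show "\<exists>V K. openin euclidean V \<and> compactin euclidean K \<and> x \<in> V \<and> V \<subseteq> K"
    using \<open>x \<in> U\<close> \<open>e > 0\<close> unfolding V_def by (metis IntI centre_in_ball compactin_euclidean_iff open_openin vimageI)
qed

lemma compact_neighbourhood_within_open:
  fixes C G :: "'a::t2_space set"
  assumes "locally_compact_space (euclidean :: 'a topology)" "compact C" "open G" "C \<subseteq> G"
  obtains U L where "open U" "compact L" "C \<subseteq> U" "U \<subseteq> L" "L \<subseteq> G"
proof -
  let ?G = "subtopology euclidean G"
  have "locally_compact_space ?G"
    using assms Hausdorff_space_euclidean_t2 by (intro locally_compact_space_open_subset) auto
  moreover have "Hausdorff_space ?G"
    by (simp add: Hausdorff_space_euclidean_t2 Hausdorff_space_subtopology)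
  moreover have "compactin ?G C"
    using assms by (simp add: compactin_subtopology)
  ultimately obtain U L where "openin ?G U" "compactin ?G L" "C \<subseteq> U" "U \<subseteq> L"
    using locally_compact_space_compact_closed_compact by metis
  with \<open>open G\<close> have "open U" "compact L" "L \<subseteq> G"
    by (simp_all add: openin_open_subtopology compactin_subtopology)
  then show thesis
    using that \<open>C \<subseteq> U\<close> \<open>U \<subseteq> L\<close> by blast
qed

lemma continuous_on_funpow:
  fixes g :: "'a::topological_space \<Rightarrow> 'a"
  shows "continuous_on UNIV g \<Longrightarrow> continuous_on UNIV (g ^^ j)"
proof (induction j)
  case (Suc j)
  then show ?case
    using continuous_on_compose[of UNIV "g ^^ j" g] by (simp add: continuous_on_subset)
qed (simp add: id_def)

lemma topspace_compact_open_top [simp]: "topspace (compact_open_top F) = F"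
proof -
  have "F = {g \<in> F. g ` {} \<subseteq> UNIV}"
    by simp
  then have "F \<in> {{g \<in> F. g ` K \<subseteq> U} | K U. compact K \<and> open U}"
    by blast
  then show ?thesis
    unfolding compact_open_top_def by auto
qed

lemma openin_compact_open_top_subbasic:
  "compact K \<Longrightarrow> open U \<Longrightarrow> openin (compact_open_top F) {g \<in> F. g ` K \<subseteq> U}"
  unfolding compact_open_top_def by (rule topology_generated_by_Basis) blast

lemma openin_compact_open_top_funpow:
  fixes F :: "('a::t2_space \<Rightarrow> 'a) set"
  assumes lc: "locally_compact_space (euclidean :: 'a topology)"
    and cont: "\<And>g. g \<in> F \<Longrightarrow> continuous_on UNIV g" and "compact C" "open W"
  shows "openin (compact_open_top F) {g \<in> F. (g ^^ j) ` C \<subseteq> W}"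
  using \<open>open W\<close>
proof (induction j arbitrary: W)
  case 0
  show ?case
    using openin_topspace[of "compact_open_top F"] by (cases "C \<subseteq> W") auto
next
  case (Suc j)
  show ?case
  proof (subst openin_subopen, intro ballI)
    fix g assume g: "g \<in> {g \<in> F. (g ^^ Suc j) ` C \<subseteq> W}"
    then have "continuous_on UNIV g"
      using cont by blast
    then have "compact ((g ^^ j) ` C)"
      using \<open>compact C\<close> continuous_on_funpow
      by (blast intro: compact_continuous_image continuous_on_subset)
    moreover have "open (g -` W)"
      using \<open>continuous_on UNIV g\<close> \<open>open W\<close> by (simp add: continuous_on_open_vimage)
    moreover have "(g ^^ j) ` C \<subseteq> g -` W"
      using g by auto
    ultimately obtain U L where UL: "open U" "compact L" "(g ^^ j) ` C \<subseteq> U" "U \<subseteq> L" "L \<subseteq> g -` W"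
      using compact_neighbourhood_within_open[OF lc] by metis
    \<comment> \<open>The compact neighbourhood \<open>L\<close> of \<open>(g ^^ j) ` C\<close> splits the condition into two open ones.\<close>
    let ?T = "{h \<in> F. h ` L \<subseteq> W} \<inter> {h \<in> F. (h ^^ j) ` C \<subseteq> U}"
    have "openin (compact_open_top F) ?T"
      using openin_compact_open_top_subbasic[OF \<open>compact L\<close> Suc.prems] Suc.IH[OF \<open>open U\<close>] by blast
    moreover have "g \<in> ?T" "?T \<subseteq> {g \<in> F. (g ^^ Suc j) ` C \<subseteq> W}"
      using g UL by (auto simp: image_subset_iff)
    ultimately show "\<exists>T. openin (compact_open_top F) T \<and> g \<in> T \<and> T \<subseteq> {g \<in> F. (g ^^ Suc j) ` C \<subseteq> W}"
      by blast
  qed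
qed

lemma openin_forward_escape:
  fixes F :: "('a::t2_space \<Rightarrow> 'a) set"
  assumes lc: "locally_compact_space (euclidean :: 'a topology)"
    and cont: "\<And>g. g \<in> F \<Longrightarrow> continuous_on UNIV g" and "closed K"
  shows "openin (prod_topology euclidean (compact_open_top F)) {(x, g). g \<in> F \<and> (g ^^ j) x \<notin> K}"
    (is "openin ?X ?E")
proof (subst openin_subopen, intro ballI)
  fix z assume "z \<in> ?E"
  then obtain x g where z: "z = (x, g)" "g \<in> F" "(g ^^ j) x \<notin> K"
    by blast
  have "open ((g ^^ j) -` (- K))"
    using \<open>closed K\<close> cont[OF \<open>g \<in> F\<close>] continuous_on_funpow
    by (auto simp: continuous_on_open_vimage closed_def)
  then obtain U L where UL: "open U" "compact L" "{x} \<subseteq> U" "U \<subseteq> L" "L \<subseteq> (g ^^ j) -` (- K)"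
    by (rule compact_neighbourhood_within_open[OF lc compact_sing]) (use z in simp)
  let ?T = "U \<times> {h \<in> F. (h ^^ j) ` L \<subseteq> - K}"
  have "openin ?X ?T"
    using openin_compact_open_top_funpow[OF lc cont \<open>compact L\<close>] \<open>closed K\<close> \<open>open U\<close>
    by (simp add: openin_prod_Times_iff closed_def)
  moreover have "z \<in> ?T" "?T \<subseteq> ?E"
    using z UL by auto
  ultimately show "\<exists>T. openin ?X T \<and> z \<in> T \<and> T \<subseteq> ?E"
    by blast
qed

lemma openin_backward_escape:
  fixes F :: "('a::t2_space \<Rightarrow> 'a) set"
  assumes lc: "locally_compact_space (euclidean :: 'a topology)"
    and cont: "\<And>g. g \<in> F \<Longrightarrow> continuous_on UNIV g" and "compact K"
  shows "openin (prod_topology euclidean (compact_open_top F)) {(x, g). g \<in> F \<and> x \<notin> (g ^^ j) ` K}"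
    (is "openin ?X ?E")
proof (subst openin_subopen, intro ballI)
  fix z assume "z \<in> ?E"
  then obtain x g where z: "z = (x, g)" "g \<in> F" "x \<notin> (g ^^ j) ` K"
    by blast
  have "compact ((g ^^ j) ` K)"
    using \<open>compact K\<close> cont[OF \<open>g \<in> F\<close>] continuous_on_funpow
    by (auto intro: compact_continuous_image continuous_on_subset)
  then have "open (- (g ^^ j) ` K)"
    by (simp add: compact_imp_closed open_Compl)
  then obtain U L where UL: "open U" "compact L" "{x} \<subseteq> U" "U \<subseteq> L" "L \<subseteq> - (g ^^ j) ` K"
    by (rule compact_neighbourhood_within_open[OF lc compact_sing]) (use z in simp)
  let ?T = "U \<times> {h \<in> F. (h ^^ j) ` K \<subseteq> - L}"
  have "openin ?X ?T"
    using openin_compact_open_top_funpow[OF lc cont \<open>compact K\<close>] \<open>compact L\<close> \<open>open U\<close>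
    by (simp add: openin_prod_Times_iff compact_imp_closed open_Compl)
  moreover have "z \<in> ?T" "?T \<subseteq> ?E"
    using z UL by auto
  ultimately show "\<exists>T. openin ?X T \<and> z \<in> T \<and> T \<subseteq> ?E"
    by blast
qed

lemma inv_funpow:
  fixes g :: "'a \<Rightarrow> 'a"
  assumes "bij g"
  shows "inv g ^^ j = inv (g ^^ j)"
proof (induction j)
  case (Suc j)
  have "inv g ^^ Suc j = inv (g ^^ j) \<circ> inv g"
    by (simp only: funpow_Suc_right Suc.IH)
  also have "\<dots> = inv (g \<circ> g ^^ j)"
    using assms by (simp add: o_inv_distrib)
  also have "\<dots> = inv (g ^^ Suc j)"
    by (simp only: funpow.simps(2))
  finally show ?case .
qed simp

lemma funpow_inv_mem_iff:
  fixes g :: "'a \<Rightarrow> 'a"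
  assumes "bij g"
  shows "(inv g ^^ j) x \<in> K \<longleftrightarrow> x \<in> (g ^^ j) ` K"
proof -
  have "inv h x \<in> K \<longleftrightarrow> x \<in> h ` K" if "bij h" for h :: "'a \<Rightarrow> 'a"
    using that by (metis bij_inv_eq_iff image_iff)
  then show ?thesis
    unfolding inv_funpow[OF assms] using assms by simp
qed

lemma Aut_continuous: "g \<in> Aut A \<Longrightarrow> continuous_on UNIV g"
  unfolding Aut_def holo_map_def by blast

lemma Aut_bij: "g \<in> Aut A \<Longrightarrow> bij g"
  unfolding Aut_def by blast

lemma topspace_XA_top: "topspace (XA_top A) = UNIV \<times> Aut A"
  by (simp add: XA_top_def aut_top_def)

lemma T_plus_subset_topspace: "T_plus A K \<subseteq> topspace (XA_top A)"
  by (auto simp: T_plus_def topspace_XA_top)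

lemma T_minus_subset_topspace: "T_minus A K \<subseteq> topspace (XA_top A)"
  by (auto simp: T_minus_def topspace_XA_top)

lemma closedin_T_plus:
  fixes A :: "('a::t2_space set \<times> ('a \<Rightarrow> complex ^ 'n)) set"
  assumes lc: "locally_compact_space (euclidean :: 'a topology)" and "compact K"
  shows "closedin (XA_top A) (T_plus A K)"
proof -
  have "topspace (XA_top A) - T_plus A K = (\<Union>j. {(x, g). g \<in> Aut A \<and> (g ^^ j) x \<notin> K})"
    by (auto simp: topspace_XA_top T_plus_def)
  moreover have "openin (XA_top A) {(x, g). g \<in> Aut A \<and> (g ^^ j) x \<notin> K}" for j
    unfolding XA_top_def aut_top_def
    by (rule openin_forward_escape[OF lc Aut_continuous compact_imp_closed[OF \<open>compact K\<close>]])
  ultimately have "openin (XA_top A) (topspace (XA_top A) - T_plus A K)"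
    by (auto intro!: openin_Union)
  then show ?thesis
    unfolding closedin_def using T_plus_subset_topspace by blast
qed

lemma closedin_T_minus:
  fixes A :: "('a::t2_space set \<times> ('a \<Rightarrow> complex ^ 'n)) set"
  assumes lc: "locally_compact_space (euclidean :: 'a topology)" and "compact K"
  shows "closedin (XA_top A) (T_minus A K)"
proof -
  have "topspace (XA_top A) - T_minus A K = (\<Union>j. {(x, g). g \<in> Aut A \<and> x \<notin> (g ^^ j) ` K})"
    by (auto simp: topspace_XA_top T_minus_def funpow_inv_mem_iff Aut_bij)
  moreover have "openin (XA_top A) {(x, g). g \<in> Aut A \<and> x \<notin> (g ^^ j) ` K}" for j
    unfolding XA_top_def aut_top_def
    by (rule openin_backward_escape[OF lc Aut_continuous \<open>compact K\<close>])
  ultimately have "openin (XA_top A) (topspace (XA_top A) - T_minus A K)"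
    by (auto intro!: openin_Union)
  then show ?thesis
    unfolding closedin_def using T_minus_subset_topspace by blast
qed

lemma interior_of_frontier_of_closedin:
  assumes "closedin X T"
  shows "X interior_of (X frontier_of T) = {}"
proof -
  have "X interior_of (X frontier_of T) \<subseteq> X interior_of T"
    using frontier_of_subset_closedin[OF assms] by (rule interior_of_mono)
  moreover have "X interior_of (X frontier_of T) \<subseteq> X frontier_of T"
    by (rule interior_of_subset)
  moreover have "X frontier_of T \<inter> X interior_of T = {}"
    by (auto simp: frontier_of_def)
  ultimately show ?thesis
    by blast
qed

lemma residual_in_avoiding_frontiers:
  assumes "countable \<T>" and closed: "\<And>T. T \<in> \<T> \<Longrightarrow> closedin X T" and "S \<subseteq> topspace X"
    and avoiding: "\<And>x. x \<in> topspace X \<Longrightarrow> (\<And>T. T \<in> \<T> \<Longrightarrow> x \<notin> X frontier_of T) \<Longrightarrow> x \<in> S"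
  shows "residual_in X S"
  unfolding residual_in_def
proof (intro conjI exI)
  let ?\<F> = "(\<lambda>T. topspace X - X frontier_of T) ` \<T>"
  show "countable ?\<F>"
    using \<open>countable \<T>\<close> by simp
  show "\<forall>U\<in>?\<F>. openin X U \<and> X closure_of U = topspace X"
  proof
    fix U assume "U \<in> ?\<F>"
    then obtain T where "T \<in> \<T>" and U: "U = topspace X - X frontier_of T"
      by blast
    have "X interior_of (X frontier_of T) = {}"
      using closed[OF \<open>T \<in> \<T>\<close>] by (rule interior_of_frontier_of_closedin)
    then show "openin X U \<and> X closure_of U = topspace X"
      unfolding U by (simp add: interior_of_eq_empty_complement openin_diff closedin_frontier_of)
  qed
  show "topspace X \<inter> \<Inter>?\<F> \<subseteq> S"
  proof
    fix x assume x: "x \<in> topspace X \<inter> \<Inter>?\<F>"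
    then have "x \<notin> X frontier_of T" if "T \<in> \<T>" for T
      using that by blast
    with x show "x \<in> S"
      using avoiding by blast
  qed
qed (fact \<open>S \<subseteq> topspace X\<close>)

lemma interior_of_if_not_in_frontier_of:
  assumes "x \<in> T" "T \<subseteq> topspace X" "x \<notin> X frontier_of T"
  shows "x \<in> X interior_of T"
proof -
  have "x \<in> X closure_of T"
    using assms(1,2) closure_of_subset by blast
  with assms(3) show ?thesis
    by (simp add: frontier_of_def)
qed

lemma tame_if_not_in_frontiers:
  assumes cofinal: "\<And>K. compact K \<Longrightarrow> \<exists>L\<in>\<K>. K \<subseteq> L" and compact: "\<And>L. L \<in> \<K> \<Longrightarrow> compact L"
    and plus: "\<And>L. L \<in> \<K> \<Longrightarrow> (p, f) \<notin> XA_top A frontier_of T_plus A L"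
    and minus: "\<And>L. L \<in> \<K> \<Longrightarrow> (p, f) \<notin> XA_top A frontier_of T_minus A L"
  shows "tame A p f"
  unfolding tame_def
proof (intro allI impI, elim conjE)
  let ?X = "XA_top A"
  fix K assume "compact K" and K: "(p, f) \<in> ?X interior_of (T_plus A K \<union> T_minus A K)"
  obtain L where "L \<in> \<K>" "K \<subseteq> L"
    using cofinal[OF \<open>compact K\<close>] by blast
  have "T_plus A K \<subseteq> T_plus A L" "T_minus A K \<subseteq> T_minus A L"
    using \<open>K \<subseteq> L\<close> by (auto simp: T_plus_def T_minus_def)
  moreover have "(p, f) \<in> T_plus A K \<union> T_minus A K"
    using interior_of_subset K by fast
  ultimately have "(p, f) \<in> T_plus A L \<union> T_minus A L"
    by blast
  then have "(p, f) \<in> ?X interior_of T_plus A L \<union> ?X interior_of T_minus A L"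
  proof
    assume "(p, f) \<in> T_plus A L"
    from interior_of_if_not_in_frontier_of[OF this T_plus_subset_topspace plus[OF \<open>L \<in> \<K>\<close>]]
    show ?thesis ..
  next
    assume "(p, f) \<in> T_minus A L"
    from interior_of_if_not_in_frontier_of[OF this T_minus_subset_topspace minus[OF \<open>L \<in> \<K>\<close>]]
    show ?thesis ..
  qed
  with compact[OF \<open>L \<in> \<K>\<close>]
  show "\<exists>L. compact L \<and> (p, f) \<in> ?X interior_of T_plus A L \<union> ?X interior_of T_minus A L"
    by blast
qed

lemma ex_countable_cofinal_compacts:
  assumes "locally_compact_space (euclidean :: 'a::second_countable_topology topology)"
  shows "\<exists>\<K> :: 'a set set. countable \<K> \<and> (\<forall>L\<in>\<K>. compact L) \<and> (\<forall>K. compact K \<longrightarrow> (\<exists>L\<in>\<K>. K \<subseteq> L))"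
proof -
  obtain \<B> :: "'a set set" where "countable \<B>" and basis: "topological_basis \<B>"
    using ex_countable_basis by blast
  define \<B>' where "\<B>' = {B \<in> \<B>. \<exists>M. compact M \<and> B \<subseteq> M}"
  have "\<forall>B\<in>\<B>'. \<exists>M. compact M \<and> B \<subseteq> M"
    by (simp add: \<B>'_def)
  then obtain M where M: "\<forall>B\<in>\<B>'. compact (M B) \<and> B \<subseteq> M B"
    by (rule bchoice[elim_format]) blast
  define \<K> where "\<K> = (\<lambda>S. \<Union>(M ` S)) ` {S. finite S \<and> S \<subseteq> \<B>'}"
  have "countable \<B>'"
    using \<open>countable \<B>\<close> by (simp add: \<B>'_def)
  then have "countable \<K>"
    unfolding \<K>_def by (intro countable_image countable_Collect_finite_subset)
  moreover have "\<forall>L\<in>\<K>. compact L"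
    unfolding \<K>_def using M by (auto intro!: compact_Union)
  moreover have "\<exists>L\<in>\<K>. K \<subseteq> L" if "compact K" for K
  proof -
    have "x \<in> \<Union>\<B>'" for x
    proof -
      obtain U C where "open U" "compact C" "x \<in> U" "U \<subseteq> C"
        using assms[unfolded locally_compact_space_def, rule_format, of x] by auto
      obtain B where "B \<in> \<B>" "x \<in> B" "B \<subseteq> U"
        by (rule topological_basisE[OF basis \<open>open U\<close> \<open>x \<in> U\<close>])
      with \<open>compact C\<close> \<open>U \<subseteq> C\<close> show ?thesis
        unfolding \<B>'_def by blast
    qed
    then have "K \<subseteq> \<Union>\<B>'"
      by blast
    moreover have "\<And>B. B \<in> \<B>' \<Longrightarrow> open B"
      using topological_basis_open[OF basis] unfolding \<B>'_def by blast
    ultimately obtain S where "S \<subseteq> \<B>'" "finite S" "K \<subseteq> \<Union>S"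
      by (rule compactE[OF \<open>compact K\<close>])
    then have "K \<subseteq> \<Union>(M ` S)" "\<Union>(M ` S) \<in> \<K>"
      unfolding \<K>_def using M by blast+
    then show ?thesis
      by blast
  qed
  ultimately show ?thesis
    by blast
qed

lemma openin_dense_snd_image:
  assumes "openin (prod_topology X Y) G" "prod_topology X Y closure_of G = topspace (prod_topology X Y)"
    and "openin X B" "B \<noteq> {}"
  shows "openin Y (snd ` (G \<inter> B \<times> topspace Y)) \<and> Y closure_of (snd ` (G \<inter> B \<times> topspace Y)) = topspace Y"
proof
  show "openin Y (snd ` (G \<inter> B \<times> topspace Y))"
    using assms(1,3) open_map_snd unfolding open_map_def
    by (metis openin_Int openin_prod_Times_iff openin_topspace)
  have "snd ` (G \<inter> B \<times> topspace Y) \<inter> T \<noteq> {}" if "openin Y T" "T \<noteq> {}" for T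
  proof -
    have "openin (prod_topology X Y) (B \<times> T)" "B \<times> T \<noteq> {}"
      using assms(3,4) that by (simp_all add: openin_prod_Times_iff)
    then obtain x y where "(x, y) \<in> G" "x \<in> B" "y \<in> T"
      using assms(2) dense_intersects_open by blast
    then show ?thesis
      using that openin_subset by fastforce
  qed
  then show "Y closure_of (snd ` (G \<inter> B \<times> topspace Y)) = topspace Y"
    by (simp add: dense_intersects_open)
qed

lemma openin_dense_slice:
  fixes G :: "('a::topological_space \<times> 'b) set"
  assumes "openin (prod_topology euclidean Y) G" "y \<in> topspace Y" "topological_basis \<B>"
    and meets: "\<And>B. B \<in> \<B> \<Longrightarrow> B \<noteq> {} \<Longrightarrow> \<exists>x\<in>B. (x, y) \<in> G"
  shows "openin euclidean {x. (x, y) \<in> G} \<and> euclidean closure_of {x. (x, y) \<in> G} = topspace euclidean"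
proof
  have "continuous_map euclidean (prod_topology euclidean Y) (\<lambda>x. (x, y))"
    using \<open>y \<in> topspace Y\<close> by (intro continuous_map_pairedI continuous_map_id continuous_map_const) auto
  then show "openin euclidean {x. (x, y) \<in> G}"
    using openin_continuous_map_preimage[OF _ assms(1)] by force
  have "{x. (x, y) \<in> G} \<inter> T \<noteq> {}" if T: "openin euclidean T" "T \<noteq> {}" for T
  proof -
    obtain t where "t \<in> T"
      using T by blast
    then obtain B where "B \<in> \<B>" "t \<in> B" "B \<subseteq> T"
      using T assms(3) topological_basisE by (metis open_openin)
    then show ?thesis
      using meets by blast
  qed
  then show "euclidean closure_of {x. (x, y) \<in> G} = topspace euclidean"
    by (simp only: dense_intersects_open) blast
qed

lemma residual_in_slice:
  fixes \<F> :: "('a::topological_space \<times> 'b) set set"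
  assumes "countable \<F>" and F: "\<And>G. G \<in> \<F> \<Longrightarrow> openin (prod_topology euclidean Y) G"
    and "topspace (prod_topology euclidean Y) \<inter> \<Inter>\<F> \<subseteq> S"
    and "y \<in> topspace Y" "topological_basis \<B>"
    and meets: "\<And>G B. G \<in> \<F> \<Longrightarrow> B \<in> \<B> \<Longrightarrow> B \<noteq> {} \<Longrightarrow> \<exists>x\<in>B. (x, y) \<in> G"
  shows "residual_in euclidean {x. (x, y) \<in> S}"
  unfolding residual_in_def
proof (intro conjI exI[of _ "(\<lambda>G. {x. (x, y) \<in> G}) ` \<F>"])
  show "countable ((\<lambda>G. {x. (x, y) \<in> G}) ` \<F>)"
    using \<open>countable \<F>\<close> by simp
  show "\<forall>U\<in>(\<lambda>G. {x. (x, y) \<in> G}) ` \<F>. openin euclidean U \<and> euclidean closure_of U = topspace euclidean"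
  proof
    fix U assume "U \<in> (\<lambda>G. {x. (x, y) \<in> G}) ` \<F>"
    then obtain G where "G \<in> \<F>" and U: "U = {x. (x, y) \<in> G}"
      by blast
    show "openin euclidean U \<and> euclidean closure_of U = topspace euclidean"
      unfolding U using F[OF \<open>G \<in> \<F>\<close>]
      by (rule openin_dense_slice[OF _ \<open>y \<in> topspace Y\<close> \<open>topological_basis \<B>\<close> meets[OF \<open>G \<in> \<F>\<close>]])
  qed
  show "topspace euclidean \<inter> \<Inter>((\<lambda>G. {x. (x, y) \<in> G}) ` \<F>) \<subseteq> {x. (x, y) \<in> S}"
    using \<open>y \<in> topspace Y\<close> \<open>topspace (prod_topology euclidean Y) \<inter> \<Inter>\<F> \<subseteq> S\<close> by auto
qed simp

lemma residual_in_slices: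
  assumes "residual_in (prod_topology (euclidean :: 'a::second_countable_topology topology) Y) S"
  shows "residual_in Y {y \<in> topspace Y. residual_in euclidean {x. (x, y) \<in> S}}"
proof -
  let ?XY = "prod_topology (euclidean :: 'a topology) Y"
  obtain \<F> where "countable \<F>" and F: "\<forall>G\<in>\<F>. openin ?XY G \<and> ?XY closure_of G = topspace ?XY"
    and "topspace ?XY \<inter> \<Inter>\<F> \<subseteq> S"
    using assms unfolding residual_in_def by (elim conjE exE) (rule that)
  obtain \<B> :: "'a set set" where "countable \<B>" and basis: "topological_basis \<B>"
    using ex_countable_basis by blast
  have open_basic: "openin euclidean B" if "B \<in> \<B>" for B
    using topological_basis_open[OF basis that] by simp
  \<comment> \<open>\<open>y\<close> lies in all these sets iff every slice of every \<open>G \<in> \<F>\<close> meets every nonempty basic set.\<close>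
  define \<F>' where "\<F>' = (\<lambda>(G, B). snd ` (G \<inter> B \<times> topspace Y)) ` (\<F> \<times> (\<B> - {{}}))"
  show ?thesis
    unfolding residual_in_def[of Y]
  proof (intro conjI exI[of _ \<F>'])
    show "countable \<F>'"
      unfolding \<F>'_def using \<open>countable \<F>\<close> \<open>countable \<B>\<close> by simp
    show "\<forall>U\<in>\<F>'. openin Y U \<and> Y closure_of U = topspace Y"
    proof
      fix U assume "U \<in> \<F>'"
      then obtain G B where "G \<in> \<F>" "B \<in> \<B>" "B \<noteq> {}" and U: "U = snd ` (G \<inter> B \<times> topspace Y)"
        unfolding \<F>'_def by blast
      then have "openin ?XY G" "?XY closure_of G = topspace ?XY"
        using F by blast+
      then show "openin Y U \<and> Y closure_of U = topspace Y"
        unfolding U by (rule openin_dense_snd_image[OF _ _ open_basic[OF \<open>B \<in> \<B>\<close>] \<open>B \<noteq> {}\<close>])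
    qed
    show "topspace Y \<inter> \<Inter>\<F>' \<subseteq> {y \<in> topspace Y. residual_in euclidean {x. (x, y) \<in> S}}"
    proof (intro subsetI CollectI conjI)
      fix y assume y: "y \<in> topspace Y \<inter> \<Inter>\<F>'"
      then show "y \<in> topspace Y"
        by (rule IntD1)
      have hits: "\<exists>x\<in>B. (x, y) \<in> G" if "G \<in> \<F>" "B \<in> \<B>" "B \<noteq> {}" for G B
      proof -
        have "snd ` (G \<inter> B \<times> topspace Y) \<in> \<F>'"
          unfolding \<F>'_def using that by (intro rev_image_eqI[of "(G, B)"]) auto
        then have "y \<in> snd ` (G \<inter> B \<times> topspace Y)"
          using y by blast
        then show ?thesis
          by force
      qed
      have "openin ?XY G" if "G \<in> \<F>" for G
        using F that by blast
      then show "residual_in euclidean {x. (x, y) \<in> S}"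
        by (rule residual_in_slice[OF \<open>countable \<F>\<close> _ \<open>topspace ?XY \<inter> \<Inter>\<F> \<subseteq> S\<close> \<open>y \<in> topspace Y\<close> basis hits])
    qed
  qed simp
qed

lemma residual_in_tame_pairs:
  fixes A :: "('a::{t2_space, second_countable_topology} set \<times> ('a \<Rightarrow> complex ^ 'n)) set"
  assumes lc: "locally_compact_space (euclidean :: 'a topology)"
  shows "residual_in (XA_top A) {(p,f). f \<in> Aut A \<and> tame A p f}"
proof -
  obtain \<K> :: "'a set set" where "countable \<K>" and compact: "\<forall>L\<in>\<K>. compact L"
    and cofinal: "\<forall>K. compact K \<longrightarrow> (\<exists>L\<in>\<K>. K \<subseteq> L)"
    using ex_countable_cofinal_compacts[OF lc] by (elim exE conjE) (rule that)
  let ?\<T> = "T_plus A ` \<K> \<union> T_minus A ` \<K>"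
  show ?thesis
  proof (rule residual_in_avoiding_frontiers[where \<T> = ?\<T>])
    show "countable ?\<T>"
      using \<open>countable \<K>\<close> by simp
    show "closedin (XA_top A) T" if "T \<in> ?\<T>" for T
    proof -
      from that obtain L where "L \<in> \<K>" and T: "T = T_plus A L \<or> T = T_minus A L"
        by blast
      with compact have "compact L"
        by blast
      from T show ?thesis
        using closedin_T_plus[OF lc \<open>compact L\<close>] closedin_T_minus[OF lc \<open>compact L\<close>] by (elim disjE) simp_all
    qed
    show "{(p,f). f \<in> Aut A \<and> tame A p f} \<subseteq> topspace (XA_top A)"
      by (auto simp: topspace_XA_top)
    show "z \<in> {(p,f). f \<in> Aut A \<and> tame A p f}"
      if "z \<in> topspace (XA_top A)" and avoid: "\<And>T. T \<in> ?\<T> \<Longrightarrow> z \<notin> XA_top A frontier_of T" for z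
    proof -
      obtain p f where z: "z = (p, f)" and "f \<in> Aut A"
        using \<open>z \<in> topspace (XA_top A)\<close> by (cases z) (simp add: topspace_XA_top)
      have "tame A p f"
      proof (rule tame_if_not_in_frontiers[OF cofinal[rule_format] compact[rule_format]])
        fix L assume "L \<in> \<K>"
        then have "T_plus A L \<in> ?\<T>" "T_minus A L \<in> ?\<T>"
          by blast+
        then show "(p, f) \<notin> XA_top A frontier_of T_plus A L" "(p, f) \<notin> XA_top A frontier_of T_minus A L"
          using avoid unfolding z by blast+
      qed
      with z \<open>f \<in> Aut A\<close> show ?thesis
        by simp
    qed
  qed
qed

theorem mainTheorem2:
  fixes A :: "('a::{t2_space, second_countable_topology} set \<times> ('a \<Rightarrow> complex ^ 'n)) set"
  assumes "complex_atlas A"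
  shows "residual_in (XA_top A) {(p,f). f \<in> Aut A \<and> tame A p f}
       \<and> residual_in (aut_top A) {f \<in> Aut A. residual_in (euclidean :: 'a topology) {p. tame A p f}}"
proof
  show tame: "residual_in (XA_top A) {(p,f). f \<in> Aut A \<and> tame A p f}"
    using locally_compact_space_complex_atlas[OF assms] by (rule residual_in_tame_pairs)
  have "{p. (p, f) \<in> {(p,f). f \<in> Aut A \<and> tame A p f}} = {p. tame A p f}" if "f \<in> Aut A" for f
    using that by simp
  then have "{f \<in> topspace (aut_top A). residual_in euclidean {p. (p, f) \<in> {(p,f). f \<in> Aut A \<and> tame A p f}}}
      = {f \<in> Aut A. residual_in euclidean {p. tame A p f}}"
    by (auto simp: aut_top_def)
  with residual_in_slices[OF tame[unfolded XA_top_def]]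
  show "residual_in (aut_top A) {f \<in> Aut A. residual_in (euclidean :: 'a topology) {p. tame A p f}}"
    by (simp only:)
qed

end
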